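(* Let $R$ be a proto-ranking on a finite set $\mathcal{X}$, and let $A\subseteq\mathcal{X}$ be such that $[x,y]_{R}\subseteq A$ for all $x,y\in A$ with $xRy$. Then the binary relation $R\cup A^2$ admits a complete and transitive extension.
   Context: A proto-ranking is an irreflexive and transitive binary relation. For a relation $Q$ and $a\,Q\,b$, the order interval is $[a,b]_Q=\{a,b\}\cup\{c: a\,Q\,c\,Q\,b\}$. A relation is complete if it is reflexive and total (for distinct $a,b$, $aQb$ or $bQa$). The strict part of $Q$ is $\{(a,b): aQb,\ \text{not } bQa\}$. A relation $Q'$ is an extension of $Q$ if $Q\subseteq Q'$ and the strict part of $Q$ is contained in the strict part of $Q'$. *)

theory Defs
  imports Main
begin

definition proto_ranking :: "'a rel \<Rightarrow> bool" where
  "proto_ranking Q \<longleftrightarrow> irrefl Q \<and> trans Q"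

text \<open>Order interval [a,b]_Q (meaningful when (a,b) in Q).\<close>
definition order_interval :: "'a rel \<Rightarrow> 'a \<Rightarrow> 'a \<Rightarrow> 'a set" where
  "order_interval Q a b = {a, b} \<union> {c. (a, c) \<in> Q \<and> (c, b) \<in> Q}"

definition complete_on :: "'a set \<Rightarrow> 'a rel \<Rightarrow> bool" where
  "complete_on X Q \<longleftrightarrow> refl_on X Q \<and> total_on X Q"

definition strict_part :: "'a rel \<Rightarrow> 'a rel" where
  "strict_part Q = {(a, b). (a, b) \<in> Q \<and> (b, a) \<notin> Q}"

definition is_extension :: "'a rel \<Rightarrow> 'a rel \<Rightarrow> bool" where
  "is_extension Q Q' \<longleftrightarrow> Q \<subseteq> Q' \<and> strict_part Q \<subseteq> strict_part Q'"

end

theory Submission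
  imports Defs
begin

text \<open>
  \<open>R \<union> A \<times> A\<close> is consistent in Suzumura's sense: no cycle of it contains a strict link.
  For a cycle through a strict link \<open>a R b\<close> with \<open>a\<close> or \<open>b\<close> outside \<open>A\<close>, transitivity of \<open>R\<close> collapses
  the way back from \<open>b\<close> to \<open>a\<close> to \<open>b R\<^sup>= c\<close>, \<open>(c, d) \<in> A \<times> A\<close>, \<open>d R\<^sup>= a\<close>; then \<open>d R c\<close> and both
  \<open>a\<close> and \<open>b\<close> lie in the order interval \<open>[d, c]\<^sub>R \<subseteq> A\<close>, a contradiction. On a finite set a
  consistent relation has an ordering extension: rank each element by the number of elements
  below it in the reflexive transitive closure.
\<close>

definition consistent :: "'a rel \<Rightarrow> bool" where
  "consistent S \<longleftrightarrow> (\<forall>(a, b) \<in> strict_part S. (b, a) \<notin> S\<^sup>+)"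

lemma consistentI:
  assumes "\<And>a b. (a, b) \<in> strict_part S \<Longrightarrow> (b, a) \<in> S\<^sup>+ \<Longrightarrow> False"
  shows "consistent S"
  using assms unfolding consistent_def by blast

lemma consistent_strict_part_rtrancl:
  assumes "consistent S" and "(a, b) \<in> strict_part S"
  shows "(b, a) \<notin> S\<^sup>*"
proof
  assume "(b, a) \<in> S\<^sup>*"
  moreover have "a \<noteq> b" and "(b, a) \<notin> S\<^sup>+"
    using assms unfolding consistent_def strict_part_def by auto
  ultimately show False by (simp add: rtrancl_eq_or_trancl)
qed

lemma ordering_by_rank:
  fixes f :: "'a \<Rightarrow> 'b::linorder"
  shows "complete_on X {(x, y). x \<in> X \<and> y \<in> X \<and> f x \<le> f y}"
    and "trans {(x, y). x \<in> X \<and> y \<in> X \<and> f x \<le> f y}"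
  unfolding complete_on_def refl_on_def total_on_def trans_def by auto

theorem finite_consistent_ordering_extension:
  assumes "finite X" and "S \<subseteq> X \<times> X" and "consistent S"
  shows "\<exists>Q. Q \<subseteq> X \<times> X \<and> complete_on X Q \<and> trans Q \<and> is_extension S Q"
proof -
  define rank where "rank x = card {z \<in> X. (z, x) \<in> S\<^sup>*}" for x
  define Q where "Q = {(x, y). x \<in> X \<and> y \<in> X \<and> rank x \<le> rank y}"
  have rank_mono: "rank x \<le> rank y" if "(x, y) \<in> S" for x y
    unfolding rank_def using that assms(1)
    by (intro card_mono) (auto intro: rtrancl_into_rtrancl)
  have rank_strict_mono: "rank x < rank y" if "(x, y) \<in> strict_part S" for x y
    unfolding rank_def
  proof (rule psubset_card_mono)
    show "finite {z \<in> X. (z, y) \<in> S\<^sup>*}" using assms(1) by simp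
    have "y \<in> X" and "(x, y) \<in> S" using that assms(2) unfolding strict_part_def by auto
    moreover have "(y, x) \<notin> S\<^sup>*" using consistent_strict_part_rtrancl[OF assms(3) that] .
    ultimately show "{z \<in> X. (z, x) \<in> S\<^sup>*} \<subset> {z \<in> X. (z, y) \<in> S\<^sup>*}"
      by (auto intro: rtrancl_into_rtrancl)
  qed
  have "Q \<subseteq> X \<times> X" unfolding Q_def by blast
  moreover have "complete_on X Q" and "trans Q"
    unfolding Q_def by (fact ordering_by_rank)+
  moreover have "S \<subseteq> Q" using rank_mono assms(2) unfolding Q_def by blast
  moreover have "strict_part S \<subseteq> strict_part Q"
  proof
    fix p assume "p \<in> strict_part S"
    then obtain x y where "p = (x, y)" "(x, y) \<in> strict_part S" "(x, y) \<in> S"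
      unfolding strict_part_def by blast
    then show "p \<in> strict_part Q"
      using rank_strict_mono[of x y] assms(2) unfolding Q_def strict_part_def by auto
  qed
  ultimately show ?thesis unfolding is_extension_def by blast
qed

lemma trancl_union_square_subset:
  assumes "trans R"
  shows "(R \<union> A \<times> A)\<^sup>+ \<subseteq> R \<union> {(x, y). \<exists>c \<in> A. \<exists>d \<in> A. (x, c) \<in> R\<^sup>= \<and> (d, y) \<in> R\<^sup>=}"
    (is "_ \<subseteq> ?U")
proof -
  have "trans ?U" using assms unfolding trans_def by blast
  have "(R \<union> A \<times> A)\<^sup>+ \<subseteq> ?U\<^sup>+" by (rule trancl_mono_subset) blast
  also have "\<dots> = ?U" using \<open>trans ?U\<close> by (rule trancl_id)
  finally show ?thesis .
qed

lemma interval_closed_union_consistent: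
  assumes "proto_ranking R"
    and closed: "\<forall>x\<in>A. \<forall>y\<in>A. (x, y) \<in> R \<longrightarrow> order_interval R x y \<subseteq> A"
  shows "consistent (R \<union> A \<times> A)"
proof (rule consistentI)
  have irr: "(x, x) \<notin> R" for x using assms(1) unfolding proto_ranking_def irrefl_def by blast
  have "trans R" using assms(1) unfolding proto_ranking_def by blast
  have in_interval: "z \<in> A" if "c \<in> A" "d \<in> A" "(d, z) \<in> R\<^sup>=" "(z, c) \<in> R\<^sup>=" "(d, c) \<in> R" for c d z
    using that closed unfolding order_interval_def by blast
  fix a b
  assume "(a, b) \<in> strict_part (R \<union> A \<times> A)" and cycle: "(b, a) \<in> (R \<union> A \<times> A)\<^sup>+"
  then have ab: "(a, b) \<in> R" and not_both: "\<not> (a \<in> A \<and> b \<in> A)"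
    unfolding strict_part_def by auto
  from cycle trancl_union_square_subset[OF \<open>trans R\<close>]
  consider "(b, a) \<in> R" | c d where "c \<in> A" "d \<in> A" "(b, c) \<in> R\<^sup>=" "(d, a) \<in> R\<^sup>="
    by blast
  then show False
  proof cases
    case 1
    then show False using ab irr \<open>trans R\<close> unfolding trans_def by blast
  next
    case 2
    have "(d, b) \<in> R\<^sup>=" "(a, c) \<in> R\<^sup>=" using 2 ab \<open>trans R\<close> unfolding trans_def by blast+
    moreover have "(d, c) \<in> R" using 2 ab \<open>trans R\<close> unfolding trans_def by blast
    ultimately show False using 2 in_interval not_both by blast
  qed
qed

theorem mainTheorem14:
  fixes X :: "'a set" and R :: "'a rel" and A :: "'a set"
  assumes "finite X"
    and "R \<subseteq> X \<times> X"
    and "proto_ranking R"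
    and "A \<subseteq> X"
    and "\<forall>x\<in>A. \<forall>y\<in>A. (x, y) \<in> R \<longrightarrow> order_interval R x y \<subseteq> A"
  shows "\<exists>Q. Q \<subseteq> X \<times> X \<and> complete_on X Q \<and> trans Q \<and> is_extension (R \<union> A \<times> A) Q"
proof (rule finite_consistent_ordering_extension)
  show "finite X" by fact
  show "R \<union> A \<times> A \<subseteq> X \<times> X" using assms(2,4) by blast
  show "consistent (R \<union> A \<times> A)" using interval_closed_union_consistent assms(3,5) .
qed

end
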